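(* Let $(G,\mathcal{T},(A^\circ,B^\circ),k)$ be a maximal Terminal Separation instance. If $A$ is a terminal-free $A^\circ$-extension with $d(A)-d(A^\circ)=1$, then there exists an integral terminal separation $(A^\ast,B^\ast)$ extending $(A^\circ,B^\circ)$ that has minimum cost among all integral terminal separations extending $(A^\circ,B^\circ)$, such that $A\setminus A^\circ\subseteq A^\ast$ or $A\setminus A^\circ\subseteq B^\ast$.
   Context: Graphs may have multiple edges but no loops; $d(A)$ is the number of edges with exactly one endpoint in $A$. For a family $\mathcal{T}$ of pairwise disjoint vertex pairs (terminals are their vertices), a terminal separation is a pair $(A,B)$ of disjoint vertex sets such that each pair in $\mathcal{T}$ either has one vertex in $A$ and one in $B$ or is disjoint from $A\cup B$; it is integral if $A\cup B=V(G)$; $(A',B')$ extends $(A,B)$ if $A\subseteq A'$, $B\subseteq B'$; cost $c(A,B)=(d(A)+d(B))/2$; $(A,B)$ is maximal if every other terminal separation extending it has strictly larger cost. A Terminal Separation instance $(G,\mathcal{T},(A^\circ,B^\circ),k)$ has every terminal of degree at most one and $(A^\circ,B^\circ)$ a terminal separation; it is maximal if $(A^\circ,B^\circ)$ is maximal. A set $A$ is an $A^\circ$-extension if $A^\circ\subseteq A\subseteq V(G)\setminus B^\circ$; it is terminal-free if $A\setminus A^\circ$ contains no terminal. *)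

theory Defs
  imports Complex_Main
begin

text \<open>A finite multigraph without loops: vertex set V, edge set E (edges are
  distinct objects, so parallel edges are allowed), and an endpoint map.\<close>
definition multigraph :: "'v set \<Rightarrow> 'e set \<Rightarrow> ('e \<Rightarrow> 'v \<times> 'v) \<Rightarrow> bool" where
  "multigraph V E ends \<longleftrightarrow> finite V \<and> finite E \<and>
     (\<forall>e\<in>E. fst (ends e) \<in> V \<and> snd (ends e) \<in> V \<and> fst (ends e) \<noteq> snd (ends e))"

definition dcut :: "'e set \<Rightarrow> ('e \<Rightarrow> 'v \<times> 'v) \<Rightarrow> 'v set \<Rightarrow> nat" where
  "dcut E ends A = card {e\<in>E. (fst (ends e) \<in> A) \<noteq> (snd (ends e) \<in> A)}"

definition degree :: "'e set \<Rightarrow> ('e \<Rightarrow> 'v \<times> 'v) \<Rightarrow> 'v \<Rightarrow> nat" where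
  "degree E ends v = card {e\<in>E. fst (ends e) = v \<or> snd (ends e) = v}"

definition pair_family :: "'v set \<Rightarrow> 'v set set \<Rightarrow> bool" where
  "pair_family V T \<longleftrightarrow> (\<forall>p\<in>T. p \<subseteq> V \<and> card p = 2) \<and>
     (\<forall>p\<in>T. \<forall>q\<in>T. p \<noteq> q \<longrightarrow> p \<inter> q = {})"

definition terminals :: "'v set set \<Rightarrow> 'v set" where
  "terminals T = \<Union>T"

definition term_sep :: "'v set \<Rightarrow> 'v set set \<Rightarrow> 'v set \<Rightarrow> 'v set \<Rightarrow> bool" where
  "term_sep V T A B \<longleftrightarrow> A \<subseteq> V \<and> B \<subseteq> V \<and> A \<inter> B = {} \<and>
     (\<forall>p\<in>T. (\<exists>a b. p = {a, b} \<and> a \<in> A \<and> b \<in> B) \<or> p \<inter> (A \<union> B) = {})"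

definition integral_sep :: "'v set \<Rightarrow> 'v set set \<Rightarrow> 'v set \<Rightarrow> 'v set \<Rightarrow> bool" where
  "integral_sep V T A B \<longleftrightarrow> term_sep V T A B \<and> A \<union> B = V"

definition extends :: "'v set \<Rightarrow> 'v set \<Rightarrow> 'v set \<Rightarrow> 'v set \<Rightarrow> bool" where
  "extends A' B' A B \<longleftrightarrow> A \<subseteq> A' \<and> B \<subseteq> B'"

definition sep_cost :: "'e set \<Rightarrow> ('e \<Rightarrow> 'v \<times> 'v) \<Rightarrow> 'v set \<Rightarrow> 'v set \<Rightarrow> real" where
  "sep_cost E ends A B = (real (dcut E ends A) + real (dcut E ends B)) / 2"

definition maximal_sep ::
  "'v set \<Rightarrow> 'e set \<Rightarrow> ('e \<Rightarrow> 'v \<times> 'v) \<Rightarrow> 'v set set \<Rightarrow> 'v set \<Rightarrow> 'v set \<Rightarrow> bool" where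
  "maximal_sep V E ends T A B \<longleftrightarrow> term_sep V T A B \<and>
     (\<forall>A' B'. term_sep V T A' B' \<and> extends A' B' A B \<and> (A', B') \<noteq> (A, B)
        \<longrightarrow> sep_cost E ends A' B' > sep_cost E ends A B)"

definition TS_instance ::
  "'v set \<Rightarrow> 'e set \<Rightarrow> ('e \<Rightarrow> 'v \<times> 'v) \<Rightarrow> 'v set set \<Rightarrow> 'v set \<Rightarrow> 'v set \<Rightarrow> nat \<Rightarrow> bool" where
  "TS_instance V E ends T A0 B0 k \<longleftrightarrow> multigraph V E ends \<and> pair_family V T \<and>
     (\<forall>t\<in>terminals T. degree E ends t \<le> 1) \<and> term_sep V T A0 B0"

definition maximal_TS_instance ::
  "'v set \<Rightarrow> 'e set \<Rightarrow> ('e \<Rightarrow> 'v \<times> 'v) \<Rightarrow> 'v set set \<Rightarrow> 'v set \<Rightarrow> 'v set \<Rightarrow> nat \<Rightarrow> bool" where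
  "maximal_TS_instance V E ends T A0 B0 k \<longleftrightarrow>
     TS_instance V E ends T A0 B0 k \<and> maximal_sep V E ends T A0 B0"

definition A0_extension :: "'v set \<Rightarrow> 'v set \<Rightarrow> 'v set \<Rightarrow> 'v set \<Rightarrow> bool" where
  "A0_extension V A0 B0 A \<longleftrightarrow> A0 \<subseteq> A \<and> A \<subseteq> V - B0"

definition terminal_free :: "'v set set \<Rightarrow> 'v set \<Rightarrow> 'v set \<Rightarrow> bool" where
  "terminal_free T A0 A \<longleftrightarrow> (A - A0) \<inter> terminals T = {}"

end

theory Submission
  imports Defs
begin

text \<open>Take a minimum-cost integral separation \<open>(A\<^sup>*, B\<^sup>*)\<close> extending \<open>(A\<degree>, B\<degree>)\<close>.
  If \<open>A - A\<degree>\<close> is not contained in \<open>B\<^sup>*\<close>, then \<open>A \<inter> A\<^sup>*\<close> strictly extends \<open>A\<degree>\<close> and,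
  being terminal-free, still separates from \<open>B\<degree>\<close>; maximality of \<open>(A\<degree>, B\<degree>)\<close> forces
  \<open>d(A \<inter> A\<^sup>*) > d(A\<degree>)\<close>, i.e. \<open>d(A \<inter> A\<^sup>*) \<ge> d(A)\<close>. Submodularity of the cut function then
  gives \<open>d(A \<union> A\<^sup>*) \<le> d(A\<^sup>*)\<close>, so moving \<open>A\<close> entirely to the \<open>A\<close>-side yields another
  optimal integral separation, and it contains \<open>A - A\<degree>\<close>.\<close>

lemma dcut_eq_sum:
  "finite E \<Longrightarrow>
   dcut E ends S = (\<Sum>e\<in>E. if (fst (ends e) \<in> S) \<noteq> (snd (ends e) \<in> S) then 1 else 0)"
  unfolding dcut_def by (simp add: sum.If_cases Int_def)

lemma dcut_union_inter_le:
  assumes "finite E"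
  shows "dcut E ends (S \<union> R) + dcut E ends (S \<inter> R) \<le> dcut E ends S + dcut E ends R"
proof -
  let ?cut = "\<lambda>X e. if (fst (ends e) \<in> X) \<noteq> (snd (ends e) \<in> X) then 1 else 0 :: nat"
  have "dcut E ends (S \<union> R) + dcut E ends (S \<inter> R) = (\<Sum>e\<in>E. ?cut (S \<union> R) e + ?cut (S \<inter> R) e)"
    using assms by (simp add: dcut_eq_sum sum.distrib)
  also have "\<dots> \<le> (\<Sum>e\<in>E. ?cut S e + ?cut R e)"
    by (rule sum_mono) auto
  also have "\<dots> = dcut E ends S + dcut E ends R"
    using assms by (simp add: dcut_eq_sum sum.distrib)
  finally show ?thesis .
qed

lemma dcut_Diff_eq:
  assumes "multigraph V E ends"
  shows "dcut E ends (V - S) = dcut E ends S"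
proof -
  have "{e\<in>E. (fst (ends e) \<in> V - S) \<noteq> (snd (ends e) \<in> V - S)} =
        {e\<in>E. (fst (ends e) \<in> S) \<noteq> (snd (ends e) \<in> S)}"
    using assms unfolding multigraph_def by auto
  then show ?thesis unfolding dcut_def by simp
qed

lemma sep_cost_integral:
  assumes "multigraph V E ends" "integral_sep V T A B"
  shows "sep_cost E ends A B = real (dcut E ends A)"
proof -
  have "B = V - A" using assms(2) unfolding integral_sep_def term_sep_def by auto
  then show ?thesis using dcut_Diff_eq[OF assms(1)] unfolding sep_cost_def by simp
qed

lemma term_sep_pairD:
  assumes "term_sep V T A B" "p \<in> T" "p \<inter> (A \<union> B) \<noteq> {}"
  obtains a b where "p = {a, b}" "a \<in> A" "b \<in> B"
proof -
  have "(\<exists>a b. p = {a, b} \<and> a \<in> A \<and> b \<in> B) \<or> p \<inter> (A \<union> B) = {}"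
    using assms(1,2) unfolding term_sep_def by simp
  with assms(3) that show thesis by blast
qed

lemma pair_familyD:
  assumes "pair_family V T" "p \<in> T"
  shows "p \<subseteq> V" "card p = 2" "\<And>q. q \<in> T \<Longrightarrow> q \<noteq> p \<Longrightarrow> q \<inter> p = {}"
  using assms unfolding pair_family_def by auto

lemma term_sep_insert_nonterminal:
  assumes "term_sep V T A B" "x \<in> V" "x \<notin> B" "x \<notin> terminals T"
  shows "term_sep V T (insert x A) B"
  unfolding term_sep_def
proof (intro conjI ballI)
  show "insert x A \<subseteq> V" "B \<subseteq> V" "insert x A \<inter> B = {}"
    using assms(1-3) unfolding term_sep_def by auto
next
  fix p assume p: "p \<in> T"
  then have "x \<notin> p" using assms(4) unfolding terminals_def by blast
  moreover have "(\<exists>a b. p = {a, b} \<and> a \<in> A \<and> b \<in> B) \<or> p \<inter> (A \<union> B) = {}"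
    using assms(1) p unfolding term_sep_def by simp
  ultimately show "(\<exists>a b. p = {a, b} \<and> a \<in> insert x A \<and> b \<in> B) \<or> p \<inter> (insert x A \<union> B) = {}"
    by blast
qed

lemma term_sep_insert_pair:
  assumes "term_sep V T A B" "pair_family V T" "{x, y} \<in> T" "x \<noteq> y"
    and "{x, y} \<inter> (A \<union> B) = {}"
  shows "term_sep V T (insert x A) (insert y B)"
  unfolding term_sep_def
proof (intro conjI ballI)
  have "{x, y} \<subseteq> V" using pair_familyD(1)[OF assms(2,3)] .
  moreover have "A \<subseteq> V" "B \<subseteq> V" "A \<inter> B = {}" using assms(1) unfolding term_sep_def by simp_all
  ultimately show "insert x A \<subseteq> V" "insert y B \<subseteq> V" "insert x A \<inter> insert y B = {}"
    using assms(4,5) by auto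
next
  fix q assume q: "q \<in> T"
  show "(\<exists>a b. q = {a, b} \<and> a \<in> insert x A \<and> b \<in> insert y B) \<or>
        q \<inter> (insert x A \<union> insert y B) = {}"
  proof (cases "q = {x, y}")
    case True
    then show ?thesis by (intro disjI1 exI[of _ x] exI[of _ y]) simp
  next
    case False
    with pair_familyD(3)[OF assms(2,3) q] have "q \<inter> {x, y} = {}" .
    then show ?thesis
    proof (cases "q \<inter> (A \<union> B) = {}")
      case False
      then obtain a b where "q = {a, b}" "a \<in> A" "b \<in> B"
        using term_sep_pairD[OF assms(1) q] by blast
      then show ?thesis by blast
    qed auto
  qed
qed

lemma ex_integral_sep_extends:
  assumes "finite V" "pair_family V T" "term_sep V T A B"
  shows "\<exists>A' B'. integral_sep V T A' B' \<and> extends A' B' A B"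
  using assms(3)
proof (induction "card (V - (A \<union> B))" arbitrary: A B rule: less_induct)
  case less
  show ?case
  proof (cases "A \<union> B = V")
    case True
    then show ?thesis using less.prems unfolding integral_sep_def extends_def by blast
  next
    case False
    then obtain x where x: "x \<in> V" "x \<notin> A \<union> B"
      using less.prems unfolding term_sep_def by blast
    have "\<exists>A1 B1. term_sep V T A1 B1 \<and> extends A1 B1 A B \<and> x \<in> A1 \<union> B1"
    proof (cases "x \<in> terminals T")
      case True
      then obtain p where p: "p \<in> T" "x \<in> p" unfolding terminals_def by blast
      then have "card p = 2" using pair_familyD(2)[OF assms(2)] by blast
      then obtain y where y: "p = {x, y}" "x \<noteq> y"
        using p(2) by (metis card_2_iff doubleton_eq_iff insertE singletonD)
      have "p \<inter> (A \<union> B) = {}"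
        using term_sep_pairD[OF less.prems p(1)] p(2) x(2) by blast
      then show ?thesis
        using term_sep_insert_pair[OF less.prems assms(2)] p(1) y unfolding extends_def by blast
    next
      case False
      then show ?thesis
        using term_sep_insert_nonterminal[OF less.prems x(1)] x(2) unfolding extends_def by blast
    qed
    then obtain A1 B1 where AB1: "term_sep V T A1 B1" "extends A1 B1 A B" "x \<in> A1 \<union> B1"
      by blast
    have "V - (A1 \<union> B1) \<subset> V - (A \<union> B)"
      using AB1 x unfolding extends_def by blast
    then have "card (V - (A1 \<union> B1)) < card (V - (A \<union> B))"
      using assms(1) by (simp add: psubset_card_mono)
    then show ?thesis
      using less.hyps[OF _ AB1(1)] AB1(2) unfolding extends_def by blast
  qed
qed

definition optimal_integral_sep ::
  "'v set \<Rightarrow> 'e set \<Rightarrow> ('e \<Rightarrow> 'v \<times> 'v) \<Rightarrow> 'v set set \<Rightarrow> 'v set \<Rightarrow> 'v set \<Rightarrow>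
   'v set \<Rightarrow> 'v set \<Rightarrow> bool" where
  "optimal_integral_sep V E ends T A0 B0 A B \<longleftrightarrow>
     integral_sep V T A B \<and> extends A B A0 B0 \<and>
     (\<forall>A' B'. integral_sep V T A' B' \<and> extends A' B' A0 B0 \<longrightarrow>
        sep_cost E ends A B \<le> sep_cost E ends A' B')"

lemma ex_optimal_integral_sep:
  assumes "finite V" "pair_family V T" "term_sep V T A0 B0"
  shows "\<exists>A B. optimal_integral_sep V E ends T A0 B0 A B"
proof -
  define S where "S = {(A, B). integral_sep V T A B \<and> extends A B A0 B0}"
  have "S \<subseteq> Pow V \<times> Pow V" unfolding S_def integral_sep_def term_sep_def by auto
  then have "finite S" using assms(1) by (meson finite_Pow_iff finite_SigmaI finite_subset)
  moreover have "S \<noteq> {}" using ex_integral_sep_extends[OF assms] unfolding S_def by auto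
  ultimately obtain AB where "is_arg_min (case_prod (sep_cost E ends)) (\<lambda>X. X \<in> S) AB"
    using ex_is_arg_min_if_finite by blast
  then show ?thesis
    unfolding optimal_integral_sep_def is_arg_min_linorder S_def by fastforce
qed

lemma optimal_integral_sep_if_le:
  assumes "optimal_integral_sep V E ends T A0 B0 A B"
    and "integral_sep V T A' B'" "extends A' B' A0 B0"
    and "sep_cost E ends A' B' \<le> sep_cost E ends A B"
  shows "optimal_integral_sep V E ends T A0 B0 A' B'"
  using assms unfolding optimal_integral_sep_def by fastforce

lemma term_sep_enlarge_terminal_free:
  assumes "term_sep V T A0 B0" "A0_extension V A0 B0 A" "terminal_free T A0 A"
  shows "term_sep V T A B0"
  unfolding term_sep_def
proof (intro conjI ballI)
  show "A \<subseteq> V" "B0 \<subseteq> V" "A \<inter> B0 = {}"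
    using assms(1,2) unfolding term_sep_def A0_extension_def by auto
next
  fix p assume p: "p \<in> T"
  have "p \<inter> (A - A0) = {}"
    using assms(3) p unfolding terminal_free_def terminals_def by blast
  moreover have "A0 \<subseteq> A" using assms(2) unfolding A0_extension_def by simp
  moreover have "(\<exists>a b. p = {a, b} \<and> a \<in> A0 \<and> b \<in> B0) \<or> p \<inter> (A0 \<union> B0) = {}"
    using assms(1) p unfolding term_sep_def by simp
  ultimately show "(\<exists>a b. p = {a, b} \<and> a \<in> A \<and> b \<in> B0) \<or> p \<inter> (A \<union> B0) = {}"
    by blast
qed

lemma integral_sep_move_to_A_side:
  assumes "integral_sep V T A B" "X \<subseteq> V" "X \<inter> B \<inter> terminals T = {}"
  shows "integral_sep V T (A \<union> X) (B - X)"
  unfolding integral_sep_def term_sep_def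
proof (intro conjI ballI)
  show "A \<union> X \<subseteq> V" "B - X \<subseteq> V" "(A \<union> X) \<inter> (B - X) = {}" "A \<union> X \<union> (B - X) = V"
    using assms(1,2) unfolding integral_sep_def term_sep_def by auto
next
  fix p assume p: "p \<in> T"
  show "(\<exists>a b. p = {a, b} \<and> a \<in> A \<union> X \<and> b \<in> B - X) \<or> p \<inter> (A \<union> X \<union> (B - X)) = {}"
  proof (cases "p \<inter> (A \<union> B) = {}")
    case True
    then show ?thesis using assms(1,2) unfolding integral_sep_def by auto
  next
    case False
    then obtain a b where "p = {a, b}" "a \<in> A" "b \<in> B"
      using assms(1) p term_sep_pairD unfolding integral_sep_def by metis
    moreover have "b \<in> terminals T" using p \<open>p = {a, b}\<close> unfolding terminals_def by blast
    ultimately show ?thesis using assms(3) by blast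
  qed
qed

lemma dcut_gt_of_maximal_sep:
  assumes "maximal_sep V E ends T A0 B0" "A0_extension V A0 B0 A" "terminal_free T A0 A"
    and "A \<noteq> A0"
  shows "dcut E ends A > dcut E ends A0"
proof -
  have "term_sep V T A B0"
    using term_sep_enlarge_terminal_free assms(1-3) unfolding maximal_sep_def by blast
  then have "sep_cost E ends A B0 > sep_cost E ends A0 B0"
    using assms unfolding maximal_sep_def extends_def A0_extension_def by blast
  then show ?thesis unfolding sep_cost_def by simp
qed

lemma optimal_integral_sep_absorb:
  assumes mg: "multigraph V E ends" and maxs: "maximal_sep V E ends T A0 B0"
    and ext: "A0_extension V A0 B0 A" and tf: "terminal_free T A0 A"
    and dA: "dcut E ends A \<le> Suc (dcut E ends A0)"
    and opt: "optimal_integral_sep V E ends T A0 B0 As Bs"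
    and meets: "A \<inter> As \<noteq> A0"
  shows "optimal_integral_sep V E ends T A0 B0 (As \<union> A) (Bs - A)"
proof -
  have int: "integral_sep V T As Bs" and "extends As Bs A0 B0"
    using opt unfolding optimal_integral_sep_def by simp_all
  then have A0As: "A0 \<subseteq> As" and B0Bs: "B0 \<subseteq> Bs" unfolding extends_def by simp_all
  have A0A: "A0 \<subseteq> A" and AV: "A \<subseteq> V - B0" using ext unfolding A0_extension_def by simp_all
  have "As \<inter> Bs = {}" using int unfolding integral_sep_def term_sep_def by simp
  then have "A \<inter> Bs \<inter> terminals T = {}" using tf A0As unfolding terminal_free_def by blast
  then have int': "integral_sep V T (As \<union> A) (Bs - A)"
    using integral_sep_move_to_A_side[OF int] AV by blast
  have ext': "extends (As \<union> A) (Bs - A) A0 B0" using A0As B0Bs AV unfolding extends_def by blast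
  have "A0_extension V A0 B0 (A \<inter> As)" using A0A A0As AV unfolding A0_extension_def by blast
  moreover have "terminal_free T A0 (A \<inter> As)" using tf unfolding terminal_free_def by blast
  ultimately have "dcut E ends (A \<inter> As) > dcut E ends A0"
    using dcut_gt_of_maximal_sep[OF maxs] meets by blast
  moreover have "dcut E ends (A \<union> As) + dcut E ends (A \<inter> As) \<le> dcut E ends A + dcut E ends As"
    using mg dcut_union_inter_le unfolding multigraph_def by blast
  ultimately have "dcut E ends (As \<union> A) \<le> dcut E ends As"
    using dA by (simp add: Un_commute)
  then show ?thesis
    using optimal_integral_sep_if_le[OF opt int' ext'] sep_cost_integral[OF mg] int int' by simp
qed

theorem lemma4p3:
  fixes V :: "'v set" and E :: "'e set" and ends :: "'e \<Rightarrow> 'v \<times> 'v"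
    and T :: "'v set set" and A0 B0 A :: "'v set" and k :: nat
  assumes "maximal_TS_instance V E ends T A0 B0 k"
    and "A0_extension V A0 B0 A"
    and "terminal_free T A0 A"
    and "int (dcut E ends A) - int (dcut E ends A0) = 1"
  shows "\<exists>As Bs. integral_sep V T As Bs \<and> extends As Bs A0 B0 \<and>
     (\<forall>A' B'. integral_sep V T A' B' \<and> extends A' B' A0 B0 \<longrightarrow>
        sep_cost E ends As Bs \<le> sep_cost E ends A' B') \<and>
     (A - A0 \<subseteq> As \<or> A - A0 \<subseteq> Bs)"
proof -
  have mg: "multigraph V E ends" and pf: "pair_family V T"
    and maxs: "maximal_sep V E ends T A0 B0"
    using assms(1) unfolding maximal_TS_instance_def TS_instance_def by simp_all
  have "finite V" using mg unfolding multigraph_def by simp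
  moreover have "term_sep V T A0 B0" using maxs unfolding maximal_sep_def by simp
  ultimately obtain As Bs where opt: "optimal_integral_sep V E ends T A0 B0 As Bs"
    using ex_optimal_integral_sep pf by blast
  show ?thesis
  proof (cases "A \<inter> As = A0")
    case True
    moreover have "As \<union> Bs = V" using opt unfolding optimal_integral_sep_def integral_sep_def by simp
    ultimately have "A - A0 \<subseteq> Bs" using assms(2) unfolding A0_extension_def by blast
    with opt show ?thesis unfolding optimal_integral_sep_def by (intro exI[of _ As] exI[of _ Bs]) simp
  next
    case False
    then have "optimal_integral_sep V E ends T A0 B0 (As \<union> A) (Bs - A)"
      using optimal_integral_sep_absorb[OF mg maxs assms(2,3) _ opt] assms(4) by simp
    then show ?thesis
      unfolding optimal_integral_sep_def by (intro exI[of _ "As \<union> A"] exI[of _ "Bs - A"]) auto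
  qed
qed

end
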